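(* For every tree $T$ of order $n\ge 2$, $\sigma_t(T)\le (n-2)\,\sigma(T)$. Equality holds if and only if $T$ is the path $P_n$. Equivalently, if $\Delta(T)\ge 3$ then $\sigma_t(T)<(n-2)\sigma(T)$.
   Context: For a graph $G=(V,E)$ with vertex degrees $d(\cdot)$: $\sigma(G)=\sum_{uv\in E}(d(u)-d(v))^2$ (sum over edges) and $\sigma_t(G)=\sum_{\{u,v\}\subseteq V}(d(u)-d(v))^2$ (sum over all unordered pairs of distinct vertices). $\Delta(T)$ is the maximum degree and $P_n$ is the path on $n$ vertices. *)

theory Defs
  imports Main
begin

definition simple_graph :: "'a set \<Rightarrow> 'a set set \<Rightarrow> bool" where
  "simple_graph V E \<longleftrightarrow> finite V \<and> (\<forall>e\<in>E. e \<subseteq> V \<and> card e = 2)"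

definition degree :: "'a set set \<Rightarrow> 'a \<Rightarrow> nat" where
  "degree E v = card {e \<in> E. v \<in> e}"

definition is_walk :: "'a set \<Rightarrow> 'a set set \<Rightarrow> 'a list \<Rightarrow> bool" where
  "is_walk V E xs \<longleftrightarrow> xs \<noteq> [] \<and> set xs \<subseteq> V \<and>
     (\<forall>i. Suc i < length xs \<longrightarrow> {xs ! i, xs ! Suc i} \<in> E)"

definition connected_graph :: "'a set \<Rightarrow> 'a set set \<Rightarrow> bool" where
  "connected_graph V E \<longleftrightarrow> V \<noteq> {} \<and>
     (\<forall>u\<in>V. \<forall>v\<in>V. \<exists>xs. is_walk V E xs \<and> hd xs = u \<and> last xs = v)"

definition is_cycle :: "'a set \<Rightarrow> 'a set set \<Rightarrow> 'a list \<Rightarrow> bool" where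
  "is_cycle V E xs \<longleftrightarrow> length xs \<ge> 3 \<and> distinct xs \<and> is_walk V E xs \<and>
     {last xs, hd xs} \<in> E"

definition is_tree :: "'a set \<Rightarrow> 'a set set \<Rightarrow> bool" where
  "is_tree V E \<longleftrightarrow> simple_graph V E \<and> connected_graph V E \<and> (\<nexists>xs. is_cycle V E xs)"

definition is_path_graph :: "'a set \<Rightarrow> 'a set set \<Rightarrow> bool" where
  "is_path_graph V E \<longleftrightarrow> (\<exists>f. bij_betw f {0..<card V} V \<and>
     E = {{f i, f (Suc i)} | i. Suc i < card V})"

definition max_degree :: "'a set \<Rightarrow> 'a set set \<Rightarrow> nat" where
  "max_degree V E = Max (degree E ` V)"

definition sigma :: "'a set set \<Rightarrow> int" where
  "sigma E = (\<Sum>e\<in>E. (THE s. \<exists>u v. e = {u, v} \<and> s = (int (degree E u) - int (degree E v))^2))"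

definition sigma_t :: "'a set \<Rightarrow> 'a set set \<Rightarrow> int" where
  "sigma_t V E = (\<Sum>p\<in>{p. p \<subseteq> V \<and> card p = 2}.
      (THE s. \<exists>u v. p = {u, v} \<and> s = (int (degree E u) - int (degree E v))^2))"

end

theory Submission
  imports Defs
begin

text \<open>
  Write x v = d v - 2 for the excess of a vertex. In a tree the excesses sum to -2, which turns
  sigma_t into n * (\<Sum>v. (x v)^2) - 4. Rooting the tree at any vertex z and setting
  t w = x w - x (parent w) for w \<noteq> z, one gets
  sigma - (\<Sum>v. (x v)^2) - 2 * x z = (\<Sum>w. t w * (t w + 1)) \<ge> 0.
  So with D = sigma - (\<Sum>v. (x v)^2) we have D \<ge> 2 * x v for every v, and
  (n - 2) * sigma - sigma_t = (\<Sum>v. (x v + 1) * (D - 2 * x v)) is a sum of non-negative terms,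
  as x v \<ge> -1. A vertex v of degree at least 3 makes a term positive: either D > 2 * x v, or all
  t w lie in {-1, 0}, and then the neighbour p of a leaf has degree 2, so its term is D > 0.
  If all degrees are at most 2, rooting at a leaf gives D \<le> 0, so every term vanishes; and a tree
  of maximum degree at most 2 is a path.
\<close>

section \<open>Walks and pendant edges\<close>

fun edge_chain :: "'a set set \<Rightarrow> 'a list \<Rightarrow> bool" where
  "edge_chain E [] \<longleftrightarrow> True"
| "edge_chain E [x] \<longleftrightarrow> True"
| "edge_chain E (x # y # xs) \<longleftrightarrow> {x, y} \<in> E \<and> edge_chain E (y # xs)"

lemma edge_chain_iff_nth:
  "edge_chain E xs \<longleftrightarrow> (\<forall>i. Suc i < length xs \<longrightarrow> {xs ! i, xs ! Suc i} \<in> E)"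
proof (induction E xs rule: edge_chain.induct)
  case (3 E x y xs)
  have "(\<forall>i. Suc i < length (x # y # xs) \<longrightarrow> P i) \<longleftrightarrow> P 0 \<and> (\<forall>i. Suc i < length (y # xs) \<longrightarrow> P (Suc i))"
    for P by (metis Suc_less_eq length_Cons not0_implies_Suc zero_less_Suc)
  then show ?case using 3 by simp
qed auto

lemma is_walk_iff_edge_chain: "is_walk V E xs \<longleftrightarrow> xs \<noteq> [] \<and> set xs \<subseteq> V \<and> edge_chain E xs"
  unfolding is_walk_def edge_chain_iff_nth by simp

lemma is_walk_rev:
  assumes "is_walk V E xs"
  shows "is_walk V E (rev xs)"
  unfolding is_walk_def
proof (intro conjI allI impI)
  fix i assume i: "Suc i < length (rev xs)"
  define j where "j = length xs - Suc (Suc i)"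
  have "{xs ! j, xs ! Suc j} \<in> E" using assms i unfolding is_walk_def j_def by auto
  moreover have "length xs - Suc i = Suc j" using i unfolding j_def by simp
  ultimately show "{rev xs ! i, rev xs ! Suc i} \<in> E"
    using i unfolding j_def by (simp add: rev_nth insert_commute)
qed (use assms in \<open>auto simp: is_walk_def\<close>)

definition pendant_edge :: "'a set set \<Rightarrow> 'a \<Rightarrow> 'a \<Rightarrow> bool" where
  "pendant_edge E l u \<longleftrightarrow> u \<noteq> l \<and> {l, u} \<in> E \<and> (\<forall>e\<in>E. l \<in> e \<longrightarrow> e = {l, u})"

lemma degree_pendant: "pendant_edge E l u \<Longrightarrow> degree E l = 1"
proof -
  assume "pendant_edge E l u"
  then have "{e \<in> E. l \<in> e} = {{l, u}}" unfolding pendant_edge_def by auto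
  then show ?thesis unfolding degree_def by simp
qed

lemma pendant_edge_vertices:
  assumes "simple_graph V E" "pendant_edge E l u"
  shows "l \<in> V" "u \<in> V"
proof -
  have "{l, u} \<in> E" using assms(2) unfolding pendant_edge_def by simp
  then show "l \<in> V" "u \<in> V" using assms(1) unfolding simple_graph_def by auto
qed

text \<open>A walk can enter and leave the pendant vertex l only through u, so the detour u l u can be cut out.\<close>

lemma edge_chain_avoid_pendant:
  assumes "edge_chain E xs" "xs \<noteq> []" "hd xs \<noteq> l" "last xs \<noteq> l" "pendant_edge E l u"
  shows "\<exists>ys. ys \<noteq> [] \<and> edge_chain (E - {{l, u}}) ys \<and> hd ys = hd xs \<and> last ys = last xs
    \<and> set ys \<subseteq> set xs - {l}"
  using assms(1-4)
proof (induction "length xs" arbitrary: xs rule: less_induct)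
  case less
  have ul: "u \<noteq> l" and lu: "\<And>e. e \<in> E \<Longrightarrow> l \<in> e \<Longrightarrow> e = {l, u}"
    using assms(5) unfolding pendant_edge_def by auto
  show ?case
  proof (cases xs rule: remdups_adj.cases)
    case 1
    then show ?thesis using less by simp
  next
    case (2 x)
    then show ?thesis using less by (intro exI[of _ "[x]"]) auto
  next
    case (3 x y rest)
    have xl: "x \<noteq> l" and exy: "{x, y} \<in> E" using less 3 by auto
    show ?thesis
    proof (cases "y = l")
      case False
      obtain ys where ys: "ys \<noteq> []" "edge_chain (E - {{l, u}}) ys" "hd ys = y"
        "last ys = last (y # rest)" "set ys \<subseteq> set (y # rest) - {l}"
        using less(1)[of "y # rest"] less(2-5) 3 False by auto
      then obtain ys' where "ys = y # ys'" by (cases ys) auto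
      moreover have "{x, y} \<noteq> {l, u}" using xl False by (auto simp: doubleton_eq_iff)
      ultimately show ?thesis using ys 3 xl exy by (intro exI[of _ "x # ys"]) auto
    next
      case True
      then have "x = u" using lu[OF exy] xl by (auto simp: doubleton_eq_iff)
      obtain w r where r: "rest = w # r" using less(5) 3 True by (cases rest) auto
      have "{l, w} \<in> E" using less(2) 3 r True by simp
      then have "w = u" using lu ul by (auto simp: doubleton_eq_iff)
      obtain ys where "ys \<noteq> []" "edge_chain (E - {{l, u}}) ys" "hd ys = w"
        "last ys = last (w # r)" "set ys \<subseteq> set (w # r) - {l}"
        using less(1)[of "w # r"] less(2-5) 3 r True \<open>w = u\<close> ul by auto
      then show ?thesis using 3 r True \<open>w = u\<close> \<open>x = u\<close> by (intro exI[of _ ys]) auto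
    qed
  qed
qed

lemma tree_remove_pendant:
  assumes T: "is_tree V E" and pe: "pendant_edge E l u"
  shows "is_tree (V - {l}) (E - {{l, u}})"
proof -
  have sg: "simple_graph V E" and cn: "connected_graph V E" and nc: "\<nexists>xs. is_cycle V E xs"
    using T unfolding is_tree_def by auto
  have ul: "u \<noteq> l" and lu: "\<And>e. e \<in> E \<Longrightarrow> l \<in> e \<Longrightarrow> e = {l, u}"
    using pe unfolding pendant_edge_def by auto
  have "u \<in> V" using pendant_edge_vertices[OF sg pe] by simp
  have "e \<subseteq> V - {l}" if "e \<in> E - {{l, u}}" for e
    using that lu sg unfolding simple_graph_def by blast
  then have "simple_graph (V - {l}) (E - {{l, u}})"
    using sg unfolding simple_graph_def by blast
  moreover have "connected_graph (V - {l}) (E - {{l, u}})"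
    unfolding connected_graph_def
  proof (intro conjI ballI)
    show "V - {l} \<noteq> {}" using \<open>u \<in> V\<close> ul by auto
    fix a b assume ab: "a \<in> V - {l}" "b \<in> V - {l}"
    then obtain xs where xs: "is_walk V E xs" "hd xs = a" "last xs = b"
      using cn unfolding connected_graph_def by auto
    then obtain ys where "ys \<noteq> []" "edge_chain (E - {{l, u}}) ys" "hd ys = a" "last ys = b"
      "set ys \<subseteq> set xs - {l}"
      using edge_chain_avoid_pendant[of E xs l u] ab pe unfolding is_walk_iff_edge_chain by auto
    then show "\<exists>xs. is_walk (V - {l}) (E - {{l, u}}) xs \<and> hd xs = a \<and> last xs = b"
      using xs unfolding is_walk_iff_edge_chain by (intro exI[of _ ys]) auto
  qed
  moreover have "\<nexists>xs. is_cycle (V - {l}) (E - {{l, u}}) xs"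
  proof
    assume "\<exists>xs. is_cycle (V - {l}) (E - {{l, u}}) xs"
    then obtain xs where "is_cycle (V - {l}) (E - {{l, u}}) xs" by blast
    then have "is_cycle V E xs" unfolding is_cycle_def is_walk_def by auto
    then show False using nc by blast
  qed
  ultimately show ?thesis unfolding is_tree_def by blast
qed

lemma is_cycle_take_chord:
  assumes "is_walk V E xs" "distinct xs" "2 \<le> j" "j < length xs" "{xs ! j, hd xs} \<in> E"
  shows "is_cycle V E (take (Suc j) xs)"
  unfolding is_cycle_def
proof (intro conjI)
  show "3 \<le> length (take (Suc j) xs)" using assms(3,4) by simp
  show "distinct (take (Suc j) xs)" using assms(2) by simp
  show "is_walk V E (take (Suc j) xs)"
    using assms(1,4) unfolding is_walk_def by (simp add: subset_trans[OF set_take_subset])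
  have "last (take (Suc j) xs) = xs ! j" using assms(4) by (simp add: take_Suc_conv_app_nth)
  moreover have "hd (take (Suc j) xs) = hd xs" by simp
  ultimately show "{last (take (Suc j) xs), hd (take (Suc j) xs)} \<in> E" using assms(5) by simp
qed

text \<open>A further neighbour of the first vertex would either extend the path or close a cycle.\<close>

lemma longest_path_start_pendant:
  assumes sg: "simple_graph V E" and acyclic: "\<nexists>cs. is_cycle V E cs"
    and xs: "is_walk V E xs" "distinct xs" "2 \<le> length xs"
    and longest: "\<And>ys. is_walk V E ys \<Longrightarrow> distinct ys \<Longrightarrow> length ys \<le> length xs"
  shows "pendant_edge E (hd xs) (xs ! 1)"
proof -
  obtain a b r where xs_eq: "xs = a # b # r"
    using xs(3) by (auto simp: numeral_2_eq_2 Suc_le_length_iff)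
  have "b \<noteq> a" using xs(2) xs_eq by auto
  moreover have "{a, b} \<in> E" using xs(1) xs_eq unfolding is_walk_iff_edge_chain by simp
  moreover have "e = {a, b}" if e: "e \<in> E" "a \<in> e" for e
  proof -
    have "e \<subseteq> V" "card e = 2" using sg e unfolding simple_graph_def by auto
    then have "\<exists>c. e = {a, c} \<and> c \<noteq> a \<and> c \<in> V" using e(2) by (auto simp: card_2_iff)
    then obtain c where ec: "e = {a, c}" "c \<noteq> a" "c \<in> V" by blast
    show ?thesis
    proof (cases "c \<in> set xs")
      case False
      have "is_walk V E (c # xs)"
        using xs(1) ec e xs_eq unfolding is_walk_iff_edge_chain by (simp add: insert_commute)
      then show ?thesis using longest[of "c # xs"] False xs(2) by simp
    next
      case True
      then obtain j where j: "j < length xs" "xs ! j = c" by (auto simp: in_set_conv_nth)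
      have "j \<noteq> 0" using j ec xs_eq by (metis nth_Cons_0)
      have "{xs ! j, hd xs} \<in> E" using j(2) e(1) ec(1) xs_eq by (simp add: insert_commute)
      then have "\<not> 2 \<le> j" using is_cycle_take_chord[OF xs(1,2) _ j(1)] acyclic by blast
      then have "j = 1" using \<open>j \<noteq> 0\<close> by simp
      then show ?thesis using j ec xs_eq by simp
    qed
  qed
  moreover have "hd xs = a" "xs ! 1 = b" using xs_eq by auto
  ultimately show ?thesis unfolding pendant_edge_def by blast
qed

lemma longest_path_exists:
  assumes "finite V" "a \<in> V" "b \<in> V" "a \<noteq> b" "{a, b} \<in> E"
  obtains xs where "is_walk V E xs" "distinct xs" "2 \<le> length xs"
    "\<And>ys. is_walk V E ys \<Longrightarrow> distinct ys \<Longrightarrow> length ys \<le> length xs"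
proof -
  define is_path_length where "is_path_length k \<longleftrightarrow> (\<exists>ys. is_walk V E ys \<and> distinct ys \<and> length ys = k)" for k
  have "is_walk V E [a, b]" using assms unfolding is_walk_def by (auto simp: less_Suc_eq)
  then have ab: "is_path_length 2" unfolding is_path_length_def using assms(4) by force
  have bound: "\<forall>k. is_path_length k \<longrightarrow> k \<le> card V"
    unfolding is_path_length_def is_walk_def using assms(1) by (metis card_mono distinct_card)
  obtain k where "is_path_length k" and k_max: "\<forall>k'. is_path_length k' \<longrightarrow> k' \<le> k"
    using Nat.ex_has_greatest_nat[OF ab bound] by blast
  then obtain xs where "is_walk V E xs" "distinct xs" "length xs = k" unfolding is_path_length_def by blast
  moreover have "2 \<le> k" using k_max ab by blast
  ultimately show ?thesis using that k_max unfolding is_path_length_def by blast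
qed

lemma tree_pendant_avoiding:
  assumes T: "is_tree V E" and "2 \<le> card V" and z: "z \<in> V"
  obtains l u where "l \<noteq> z" "pendant_edge E l u"
proof -
  have sg: "simple_graph V E" and cn: "connected_graph V E" and acyclic: "\<nexists>cs. is_cycle V E cs"
    using T unfolding is_tree_def by auto
  have fin: "finite V" using sg unfolding simple_graph_def by simp
  have "card (V - {z}) \<noteq> 0" using assms(2) z fin by simp
  then obtain b where b: "b \<in> V" "b \<noteq> z" by (metis Diff_iff card.empty equals0I singleton_iff)
  obtain ws where ws: "is_walk V E ws" "hd ws = z" "last ws = b"
    using cn z b unfolding connected_graph_def by blast
  then have "2 \<le> length ws" unfolding is_walk_def using b
    by (cases ws rule: remdups_adj.cases) auto
  then have e: "{ws ! 0, ws ! 1} \<in> E" "ws ! 0 \<in> V" "ws ! 1 \<in> V"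
    using ws unfolding is_walk_def by (auto dest: nth_mem)
  then have "ws ! 0 \<noteq> ws ! 1" using sg unfolding simple_graph_def by force
  then obtain xs where xs: "is_walk V E xs" "distinct xs" "2 \<le> length xs"
    and longest: "\<And>ys. is_walk V E ys \<Longrightarrow> distinct ys \<Longrightarrow> length ys \<le> length xs"
    using longest_path_exists[OF fin e(2,3) _ e(1)] by blast
  have hd_pendant: "pendant_edge E (hd xs) (xs ! 1)"
    by (rule longest_path_start_pendant[OF sg acyclic xs longest])
  have "pendant_edge E (hd (rev xs)) (rev xs ! 1)"
    by (rule longest_path_start_pendant[OF sg acyclic is_walk_rev[OF xs(1)]]) (use xs longest in auto)
  then have last_pendant: "pendant_edge E (last xs) (rev xs ! 1)" by (simp only: hd_rev)
  have "hd xs \<noteq> last xs"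
  proof -
    obtain a b r where "xs = a # b # r" using xs(3) by (auto simp: numeral_2_eq_2 Suc_le_length_iff)
    then show ?thesis using xs(2) last_in_set[of "b # r"] by auto
  qed
  show ?thesis
  proof (cases "hd xs = z")
    case True
    show ?thesis by (rule that[OF _ last_pendant]) (use True \<open>hd xs \<noteq> last xs\<close> in simp)
  next
    case False
    show ?thesis by (rule that[OF False hd_pendant])
  qed
qed

lemma tree_leaf_avoiding:
  assumes "is_tree V E" "2 \<le> card V" "z \<in> V"
  obtains l where "l \<in> V - {z}" "degree E l = 1"
proof -
  obtain l u where "l \<noteq> z" and pe: "pendant_edge E l u" using tree_pendant_avoiding[OF assms] .
  moreover have "simple_graph V E" using assms(1) unfolding is_tree_def by simp
  ultimately have "l \<in> V - {z}" using pendant_edge_vertices(1) by simp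
  then show ?thesis by (rule that[OF _ degree_pendant[OF pe]])
qed

section \<open>Rooted trees\<close>

definition excess :: "'a set set \<Rightarrow> 'a \<Rightarrow> int" where
  "excess E v = int (degree E v) - 2"

definition sigma_slack :: "'a set \<Rightarrow> 'a set set \<Rightarrow> int" where
  "sigma_slack V E = sigma E - (\<Sum>v\<in>V. (excess E v)^2)"

lemma the_sq_diff_doubleton:
  fixes g :: "'a \<Rightarrow> 'b::comm_ring_1"
  shows "(THE s. \<exists>u v. {a, b} = {u, v} \<and> s = (g u - g v)^2) = (g a - g b)^2"
proof (rule the_equality)
  fix s assume "\<exists>u v. {a, b} = {u, v} \<and> s = (g u - g v)^2"
  then show "s = (g a - g b)^2" by (auto simp: doubleton_eq_iff power2_commute)
qed blast

lemma consecutive_product_nonneg: "0 \<le> (t::int) * (t + 1)"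
  by (cases "t \<ge> 0") (auto simp: mult_nonpos_nonpos)

text \<open>A tree given by the parent map of a root; depth certifies that iterating parent reaches root.\<close>

locale rooted_tree =
  fixes V :: "'a set" and E :: "'a set set" and root :: 'a
    and parent :: "'a \<Rightarrow> 'a" and depth :: "'a \<Rightarrow> nat"
  assumes finite_vertices: "finite V"
    and root_in: "root \<in> V"
    and depth_root: "depth root = 0"
    and parent_in: "v \<in> V - {root} \<Longrightarrow> parent v \<in> V"
    and depth_parent: "v \<in> V - {root} \<Longrightarrow> depth v = Suc (depth (parent v))"
    and edges_eq: "E = (\<lambda>v. {v, parent v}) ` (V - {root})"

lemma rooted_tree_add_pendant:
  assumes "rooted_tree (V - {l}) (E - {{l, u}}) z parent depth"
    and pe: "pendant_edge E l u" and "l \<noteq> z" "l \<in> V" "u \<in> V"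
  shows "rooted_tree V E z (parent(l := u)) (depth(l := Suc (depth u)))"
proof -
  interpret r: rooted_tree "V - {l}" "E - {{l, u}}" z parent depth by fact
  have ul: "u \<noteq> l" and lu: "{l, u} \<in> E" using pe unfolding pendant_edge_def by auto
  have "u \<in> V - {l}" using ul \<open>u \<in> V\<close> by simp
  show ?thesis
  proof unfold_locales
    show "finite V" using r.finite_vertices by simp
    show "z \<in> V" using r.root_in by simp
    show "(depth(l := Suc (depth u))) z = 0" using r.depth_root assms(3) by simp
  next
    fix v assume "v \<in> V - {z}"
    then show "(parent(l := u)) v \<in> V" using r.parent_in[of v] \<open>u \<in> V - {l}\<close> by auto
  next
    fix v assume "v \<in> V - {z}"
    then show "(depth(l := Suc (depth u))) v = Suc ((depth(l := Suc (depth u))) ((parent(l := u)) v))"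
      using r.depth_parent[of v] r.parent_in[of v] ul by auto
  next
    have "(\<lambda>v. {v, (parent(l := u)) v}) ` (V - {l} - {z}) = E - {{l, u}}"
      unfolding r.edges_eq by (rule image_cong) auto
    moreover have "V - {z} = insert l (V - {l} - {z})" using \<open>l \<noteq> z\<close> \<open>l \<in> V\<close> by auto
    ultimately have "(\<lambda>v. {v, (parent(l := u)) v}) ` (V - {z}) = insert {l, u} (E - {{l, u}})"
      by simp
    then show "E = (\<lambda>v. {v, (parent(l := u)) v}) ` (V - {z})" using lu by (simp add: insert_absorb)
  qed
qed

lemma tree_has_rooting:
  assumes "is_tree V E" "z \<in> V"
  shows "\<exists>parent depth. rooted_tree V E z parent depth"
  using assms
proof (induction "card V" arbitrary: V E rule: less_induct)
  case less
  have sg: "simple_graph V E" using less.prems(1) unfolding is_tree_def by simp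
  have fin: "finite V" using sg unfolding simple_graph_def by simp
  show ?case
  proof (cases "2 \<le> card V")
    case False
    then have "card V \<le> Suc 0" by simp
    then have V: "V = {z}" using less.prems(2) fin by (auto simp: card_le_Suc0_iff_eq)
    have "E = {}"
    proof -
      have "card e \<le> card {z}" if "e \<in> E" for e
        using that sg card_mono[of "{z}" e] unfolding simple_graph_def V by simp
      then show ?thesis using sg unfolding simple_graph_def by fastforce
    qed
    then have "rooted_tree V E z id (\<lambda>_. 0)" by unfold_locales (auto simp: V)
    then show ?thesis by blast
  next
    case True
    obtain l u where "l \<noteq> z" and pe: "pendant_edge E l u"
      using tree_pendant_avoiding[OF less.prems(1) True less.prems(2)] by blast
    have "l \<in> V" "u \<in> V" using pendant_edge_vertices[OF sg pe] by auto
    then have "card (V - {l}) < card V" using fin by (metis card_Diff1_less)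
    moreover have "is_tree (V - {l}) (E - {{l, u}})" by (rule tree_remove_pendant[OF less.prems(1) pe])
    ultimately obtain parent depth where "rooted_tree (V - {l}) (E - {{l, u}}) z parent depth"
      using less.hyps less.prems(2) \<open>l \<noteq> z\<close> by blast
    then show ?thesis
      using rooted_tree_add_pendant[OF _ pe \<open>l \<noteq> z\<close> \<open>l \<in> V\<close> \<open>u \<in> V\<close>] by blast
  qed
qed

context rooted_tree
begin

definition children :: "'a \<Rightarrow> 'a set" where
  "children v = {w \<in> V - {root}. parent w = v}"

definition excess_jump :: "'a \<Rightarrow> int" where
  "excess_jump w = excess E w - excess E (parent w)"

lemma parent_neq: "v \<in> V - {root} \<Longrightarrow> parent v \<noteq> v"
  using depth_parent by (metis n_not_Suc_n)

lemma inj_on_parent_edge: "inj_on (\<lambda>v. {v, parent v}) (V - {root})"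
proof (rule inj_onI)
  fix v w assume v: "v \<in> V - {root}" and w: "w \<in> V - {root}" and eq: "{v, parent v} = {w, parent w}"
  show "v = w"
  proof (rule ccontr)
    assume "v \<noteq> w"
    then have "v = parent w" "w = parent v" using eq by (auto simp: doubleton_eq_iff)
    then show False using depth_parent[OF v] depth_parent[OF w] by simp
  qed
qed

lemma degree_eq: "v \<in> V \<Longrightarrow> degree E v = (if v = root then 0 else 1) + card (children v)"
proof -
  assume v: "v \<in> V"
  let ?W = "{w \<in> V - {root}. w = v \<or> parent w = v}"
  have "{e \<in> E. v \<in> e} = (\<lambda>w. {w, parent w}) ` ?W" unfolding edges_eq by auto
  moreover have "inj_on (\<lambda>w. {w, parent w}) ?W" by (rule inj_on_subset[OF inj_on_parent_edge]) auto
  ultimately have "degree E v = card ?W" unfolding degree_def by (simp add: card_image)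
  also have "?W = (if v = root then {} else {v}) \<union> children v"
    using v unfolding children_def by auto
  also have "card \<dots> = card (if v = root then {} else {v}) + card (children v)"
    using finite_vertices parent_neq v unfolding children_def by (intro card_Un_disjoint) auto
  finally show ?thesis by simp
qed

lemma card_children_eq:
  "v \<in> V \<Longrightarrow> int (card (children v)) = excess E v + 1 + (if v = root then 1 else 0)"
  using degree_eq unfolding excess_def by simp

lemma sum_parent:
  fixes g :: "'a \<Rightarrow> 'b::comm_semiring_1"
  shows "(\<Sum>w\<in>V - {root}. g (parent w)) = (\<Sum>v\<in>V. of_nat (card (children v)) * g v)"
proof -
  have "(\<Sum>w\<in>V - {root}. g (parent w)) = (\<Sum>v\<in>V. \<Sum>w\<in>children v. g (parent w))"
    unfolding children_def by (rule sum.group[symmetric]) (use finite_vertices parent_in in auto)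
  also have "\<dots> = (\<Sum>v\<in>V. of_nat (card (children v)) * g v)"
    unfolding children_def by (intro sum.cong) auto
  finally show ?thesis .
qed

lemma sigma_eq: "sigma E = (\<Sum>w\<in>V - {root}. (excess_jump w)^2)"
proof -
  have "sigma E = (\<Sum>w\<in>V - {root}. (int (degree E w) - int (degree E (parent w)))^2)"
    unfolding sigma_def edges_eq
    by (simp add: sum.reindex[OF inj_on_parent_edge] the_sq_diff_doubleton)
  then show ?thesis unfolding excess_jump_def excess_def by simp
qed

lemma sum_excess: "(\<Sum>v\<in>V. excess E v) = -2"
proof -
  have "(\<Sum>v\<in>V. int (card (children v))) = int (card V) - 1"
  proof -
    have "0 < card V" using finite_vertices root_in card_gt_0_iff by blast
    then show ?thesis using sum_parent[of "\<lambda>_. 1::int"] finite_vertices root_in by simp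
  qed
  moreover have "(\<Sum>v\<in>V. excess E v) = (\<Sum>v\<in>V. int (card (children v))) - 1 - int (card V)"
  proof -
    have "(\<Sum>v\<in>V. excess E v) = (\<Sum>v\<in>V. int (card (children v)) - 1 - (if v = root then 1 else 0))"
      by (intro sum.cong) (simp_all add: card_children_eq)
    also have "\<dots> = (\<Sum>v\<in>V. int (card (children v))) - int (card V) - 1"
      using finite_vertices root_in by (simp add: sum_subtractf)
    finally show ?thesis by simp
  qed
  ultimately show ?thesis by simp
qed

lemma excess_ge: "v \<in> V - {root} \<Longrightarrow> -1 \<le> excess E v"
  using degree_eq[of v] unfolding excess_def by simp

lemma excess_parent_ge:
  assumes "w \<in> V - {root}" "parent w \<noteq> root"
  shows "0 \<le> excess E (parent w)"
proof -
  have "w \<in> children (parent w)" using assms unfolding children_def by simp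
  then have "card (children (parent w)) \<noteq> 0"
    using finite_vertices unfolding children_def by auto
  then show ?thesis using degree_eq[of "parent w"] parent_in[OF assms(1)] assms(2)
    unfolding excess_def by simp
qed

lemma slack_eq:
  "sigma_slack V E - 2 * excess E root = (\<Sum>w\<in>V - {root}. excess_jump w * (excess_jump w + 1))"
proof -
  let ?x = "excess E"
  have "(\<Sum>w\<in>V - {root}. ?x (parent w)) = (\<Sum>v\<in>V. (?x v + 1 + (if v = root then 1 else 0)) * ?x v)"
    using sum_parent[of ?x] card_children_eq by (simp cong: sum.cong)
  also have "\<dots> = (\<Sum>v\<in>V. (?x v)^2 + ?x v + (if v = root then ?x v else 0))"
    by (intro sum.cong) (auto simp: algebra_simps power2_eq_square)
  also have "\<dots> = (\<Sum>v\<in>V. (?x v)^2) + (\<Sum>v\<in>V. ?x v) + ?x root"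
    using finite_vertices root_in by (simp add: sum.distrib)
  finally have parents: "(\<Sum>w\<in>V - {root}. ?x (parent w)) = (\<Sum>v\<in>V. (?x v)^2) - 2 + ?x root"
    using sum_excess by simp
  have "(\<Sum>w\<in>V - {root}. excess_jump w * (excess_jump w + 1))
      = (\<Sum>w\<in>V - {root}. (excess_jump w)^2) + (\<Sum>w\<in>V - {root}. ?x w) - (\<Sum>w\<in>V - {root}. ?x (parent w))"
    unfolding excess_jump_def by (simp add: ring_distribs power2_eq_square sum.distrib sum_subtractf)
  also have "(\<Sum>w\<in>V - {root}. ?x w) = -2 - ?x root"
    using sum_excess finite_vertices root_in by (simp add: sum_diff1)
  finally show ?thesis unfolding sigma_slack_def sigma_eq parents by simp
qed

lemma excess_root_le_slack: "2 * excess E root \<le> sigma_slack V E"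
proof -
  have "0 \<le> (\<Sum>w\<in>V - {root}. excess_jump w * (excess_jump w + 1))"
    by (intro sum_nonneg consecutive_product_nonneg)
  then show ?thesis using slack_eq by linarith
qed

lemma degree_parent_of_leaf_if_slack_tight:
  assumes tight: "sigma_slack V E = 2 * excess E root" and "2 \<le> degree E root"
    and l: "l \<in> V - {root}" "degree E l = 1"
  shows "degree E (parent l) = 2"
proof -
  have "(\<Sum>w\<in>V - {root}. excess_jump w * (excess_jump w + 1)) = 0" using slack_eq tight by simp
  then have "excess_jump l * (excess_jump l + 1) = 0"
    using finite_vertices l(1) consecutive_product_nonneg by (subst (asm) sum_nonneg_eq_0_iff) auto
  then have "excess E l - excess E (parent l) \<in> {0, -1}" unfolding excess_jump_def by auto
  moreover have "0 \<le> excess E (parent l)"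
    using assms(2) excess_parent_ge[OF l(1)] unfolding excess_def by (cases "parent l = root") auto
  ultimately show ?thesis using l(2) unfolding excess_def by auto
qed

lemma slack_nonpos_if_degree_le_2:
  assumes deg: "\<forall>v\<in>V. degree E v \<le> 2" and "degree E root = 1"
  shows "sigma_slack V E \<le> 0"
proof -
  have bound: "excess_jump w * (excess_jump w + 1) \<le> (if parent w = root then 2 else 0)"
    if w: "w \<in> V - {root}" for w
  proof -
    have "excess E w \<in> {-1, 0}" using excess_ge[OF w] deg w unfolding excess_def by auto
    moreover have "excess E (parent w) = (if parent w = root then -1 else 0)"
      using excess_parent_ge[OF w] deg parent_in[OF w] assms(2) unfolding excess_def by auto
    ultimately show ?thesis unfolding excess_jump_def by auto
  qed
  have "(\<Sum>w\<in>V - {root}. excess_jump w * (excess_jump w + 1)) \<le> (\<Sum>w\<in>V - {root}. if parent w = root then 2 else 0)"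
    using bound by (rule sum_mono)
  also have "\<dots> = 2 * int (card (children root))"
    using finite_vertices unfolding children_def by (simp add: sum.If_cases Int_def conj_commute)
  also have "\<dots> = 2" using card_children_eq[OF root_in] assms(2) unfolding excess_def by simp
  finally show ?thesis using slack_eq assms(2) unfolding excess_def by simp
qed

lemma finite_children: "finite (children v)"
  using finite_vertices unfolding children_def by simp

lemma depth_values_downward_closed: "v \<in> V \<Longrightarrow> j \<le> depth v \<Longrightarrow> j \<in> depth ` V"
proof (induction "depth v" arbitrary: v)
  case 0
  then show ?case by (metis image_eqI le_zero_eq)
next
  case (Suc k)
  then have v: "v \<in> V - {root}" using depth_root by auto
  show ?case
  proof (cases "j = Suc k")
    case True
    then show ?thesis using Suc by (metis image_eqI)
  next
    case False
    then show ?thesis using Suc depth_parent[OF v] parent_in[OF v] by simp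
  qed
qed

lemma inj_on_depth_if_children_le_1:
  assumes "\<forall>v\<in>V. card (children v) \<le> 1"
  shows "inj_on depth V"
proof -
  have "\<forall>u\<in>V. \<forall>v\<in>V. depth u = k \<longrightarrow> depth v = k \<longrightarrow> u = v" for k
  proof (induction k)
    case 0
    have "u = root" if "u \<in> V" "depth u = 0" for u
      using that depth_parent[of u] by (cases "u = root") auto
    then show ?case by blast
  next
    case (Suc k)
    show ?case
    proof (intro ballI impI)
      fix u v assume uv: "u \<in> V" "v \<in> V" "depth u = Suc k" "depth v = Suc k"
      then have u: "u \<in> V - {root}" and v: "v \<in> V - {root}" using depth_root by auto
      then have "parent u = parent v"
        using Suc.IH parent_in depth_parent uv by (metis Suc_inject)
      then have "{u, v} \<subseteq> children (parent u)" using u v unfolding children_def by auto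
      then have "card {u, v} \<le> 1"
        using assms parent_in[OF u] card_mono[OF finite_children] by (meson order.trans)
      then show "u = v" by (cases "u = v") auto
    qed
  qed
  then show ?thesis by (auto intro: inj_onI)
qed

lemma depth_image_eq:
  assumes "inj_on depth V"
  shows "depth ` V = {0..<card V}"
proof -
  have card_eq: "card (depth ` V) = card V" using card_image[OF assms] .
  have "depth ` V \<subseteq> {0..<card V}"
  proof
    fix k assume "k \<in> depth ` V"
    then have "{0..k} \<subseteq> depth ` V" using depth_values_downward_closed by auto
    then have "card {0..k} \<le> card V" using card_mono[of "depth ` V" "{0..k}"] finite_vertices card_eq by simp
    then show "k \<in> {0..<card V}" by simp
  qed
  then show ?thesis using card_eq by (intro card_subset_eq) auto
qed

lemma is_path_graph_if_children_le_1:
  assumes "\<forall>v\<in>V. card (children v) \<le> 1"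
  shows "is_path_graph V E"
proof -
  have inj: "inj_on depth V" using inj_on_depth_if_children_le_1[OF assms] .
  then have "bij_betw depth V {0..<card V}" using depth_image_eq by (simp add: bij_betw_def)
  define f where "f = inv_into V depth"
  have bij: "bij_betw f {0..<card V} V"
    unfolding f_def by (rule bij_betw_inv_into) fact
  have f_depth: "f (depth v) = v" if "v \<in> V" for v unfolding f_def using inv_into_f_f[OF inj that] .
  have f_in: "f i \<in> V" and depth_f: "depth (f i) = i" if "i < card V" for i
    using that bij depth_image_eq[OF inj] unfolding f_def
    by (auto simp: bij_betw_def f_inv_into_f[of i depth V])
  have "E = {{f i, f (Suc i)} | i. Suc i < card V}"
  proof (intro equalityI subsetI)
    fix e assume "e \<in> E"
    then obtain w where w: "w \<in> V - {root}" "e = {w, parent w}" unfolding edges_eq by blast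
    have "depth w < card V" using depth_image_eq[OF inj] w(1) by auto
    moreover have "f (depth (parent w)) = parent w" "f (Suc (depth (parent w))) = w"
      using f_depth[of "parent w"] f_depth[of w] parent_in[OF w(1)] depth_parent[OF w(1)] w(1) by auto
    ultimately show "e \<in> {{f i, f (Suc i)} | i. Suc i < card V}"
      using w depth_parent[OF w(1)] by (intro CollectI exI[of _ "depth (parent w)"]) (auto simp: insert_commute)
  next
    fix e assume "e \<in> {{f i, f (Suc i)} | i. Suc i < card V}"
    then obtain i where i: "Suc i < card V" "e = {f i, f (Suc i)}" by blast
    have w: "f (Suc i) \<in> V - {root}" using f_in[OF i(1)] depth_f[OF i(1)] depth_root by auto
    then have "depth (parent (f (Suc i))) = i" using depth_parent depth_f[OF i(1)] by simp
    then have "parent (f (Suc i)) = f i" using f_depth parent_in[OF w] by metis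
    then have "e = {f (Suc i), parent (f (Suc i))}" using i(2) by (simp add: insert_commute)
    then show "e \<in> E" using w unfolding edges_eq by blast
  qed
  then show ?thesis unfolding is_path_graph_def using bij by blast
qed

end

lemma sum_sum_sq_diff:
  fixes x :: "'a \<Rightarrow> 'b::comm_ring_1"
  shows "(\<Sum>u\<in>A. \<Sum>v\<in>A. (x u - x v)^2) = 2 * (of_nat (card A) * (\<Sum>v\<in>A. (x v)^2) - (\<Sum>v\<in>A. x v)^2)"
proof -
  have "(\<Sum>u\<in>A. \<Sum>v\<in>A. (x u - x v)^2)
      = (\<Sum>u\<in>A. \<Sum>v\<in>A. (x u)^2) + (\<Sum>u\<in>A. \<Sum>v\<in>A. (x v)^2) - (\<Sum>u\<in>A. \<Sum>v\<in>A. 2 * (x u * x v))"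
    by (simp add: power2_diff mult.assoc sum.distrib sum_subtractf)
  also have "(\<Sum>u\<in>A. \<Sum>v\<in>A. 2 * (x u * x v)) = 2 * (\<Sum>v\<in>A. x v)^2"
    by (simp add: sum_distrib_left[symmetric] sum_product power2_eq_square)
  finally show ?thesis by (simp add: sum_distrib_left algebra_simps)
qed

lemma sigma_t_double:
  assumes "finite V"
  shows "2 * sigma_t V E = (\<Sum>u\<in>V. \<Sum>v\<in>V. (int (degree E u) - int (degree E v))^2)"
proof -
  define d where "d v = int (degree E v)" for v
  define P where "P = {p. p \<subseteq> V \<and> card p = 2}"
  define A where "A = {q \<in> V \<times> V. fst q \<noteq> snd q}"
  have finP: "finite P" using assms unfolding P_def by (simp add: finite_subset[of _ "Pow V"] subset_eq)
  have "(\<Sum>q\<in>A. (d (fst q) - d (snd q))^2)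
      = (\<Sum>p\<in>P. \<Sum>q\<in>{q \<in> A. {fst q, snd q} = p}. (d (fst q) - d (snd q))^2)"
    using assms finP unfolding A_def P_def by (intro sum.group[symmetric]) auto
  also have "\<dots> = (\<Sum>p\<in>P. 2 * (THE s. \<exists>u v. p = {u, v} \<and> s = (d u - d v)^2))"
  proof (rule sum.cong)
    fix p assume "p \<in> P"
    then obtain a b where p: "p = {a, b}" "a \<noteq> b" "a \<in> V" "b \<in> V"
      unfolding P_def by (auto simp: card_2_iff)
    then have "{q \<in> A. {fst q, snd q} = p} = {(a, b), (b, a)}"
      unfolding A_def by (auto simp: doubleton_eq_iff)
    then show "(\<Sum>q\<in>{q \<in> A. {fst q, snd q} = p}. (d (fst q) - d (snd q))^2)
        = 2 * (THE s. \<exists>u v. p = {u, v} \<and> s = (d u - d v)^2)"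
      using p by (simp add: the_sq_diff_doubleton power2_commute)
  qed simp
  also have "\<dots> = 2 * sigma_t V E" unfolding sigma_t_def P_def d_def by (simp add: sum_distrib_left)
  finally have "2 * sigma_t V E = (\<Sum>q\<in>A. (d (fst q) - d (snd q))^2)" ..
  also have "\<dots> = (\<Sum>q\<in>V \<times> V. (d (fst q) - d (snd q))^2)"
    unfolding A_def using assms by (intro sum.mono_neutral_left) auto
  finally show ?thesis unfolding d_def sum.cartesian_product case_prod_beta .
qed

lemma sum_weighted_slack_identity:
  fixes x :: "'a \<Rightarrow> 'b::comm_ring_1"
  assumes "(\<Sum>v\<in>A. x v) = -2"
  shows "(\<Sum>v\<in>A. (x v + 1) * (D - 2 * x v)) = (of_nat (card A) - 2) * D - 2 * (\<Sum>v\<in>A. (x v)^2) + 4"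
proof -
  have "(\<Sum>v\<in>A. (x v + 1) * (D - 2 * x v))
      = D * (\<Sum>v\<in>A. x v) + of_nat (card A) * D - 2 * (\<Sum>v\<in>A. (x v)^2) - 2 * (\<Sum>v\<in>A. x v)"
    by (simp add: algebra_simps power2_eq_square sum.distrib sum_subtractf sum_distrib_left sum_distrib_right)
  then show ?thesis using assms by (simp add: algebra_simps)
qed

definition gap_term :: "'a set \<Rightarrow> 'a set set \<Rightarrow> 'a \<Rightarrow> int" where
  "gap_term V E v = (excess E v + 1) * (sigma_slack V E - 2 * excess E v)"

lemma tree_sum_excess:
  assumes "is_tree V E" "V \<noteq> {}"
  shows "(\<Sum>v\<in>V. excess E v) = -2"
proof -
  obtain z where "z \<in> V" using assms(2) by blast
  then obtain parent depth where "rooted_tree V E z parent depth"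
    using tree_has_rooting[OF assms(1)] by blast
  then show ?thesis by (rule rooted_tree.sum_excess)
qed

lemma tree_excess_ge:
  assumes "is_tree V E" "2 \<le> card V" "v \<in> V"
  shows "-1 \<le> excess E v"
proof -
  obtain l where l: "l \<in> V - {v}" "degree E l = 1" using tree_leaf_avoiding[OF assms] .
  then obtain parent depth where "rooted_tree V E l parent depth"
    using tree_has_rooting[OF assms(1)] by blast
  then show ?thesis using rooted_tree.excess_ge assms(3) l by fastforce
qed

lemma tree_excess_le_slack:
  assumes "is_tree V E" "v \<in> V"
  shows "2 * excess E v \<le> sigma_slack V E"
proof -
  obtain parent depth where "rooted_tree V E v parent depth" using tree_has_rooting[OF assms] by blast
  then show ?thesis by (rule rooted_tree.excess_root_le_slack)
qed

lemma tree_sigma_t_eq: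
  assumes "is_tree V E" "V \<noteq> {}"
  shows "sigma_t V E = int (card V) * (\<Sum>v\<in>V. (excess E v)^2) - 4"
proof -
  have "finite V" using assms(1) unfolding is_tree_def simple_graph_def by simp
  then have "2 * sigma_t V E = (\<Sum>u\<in>V. \<Sum>v\<in>V. (excess E u - excess E v)^2)"
    unfolding sigma_t_double[OF \<open>finite V\<close>] excess_def by simp
  then show ?thesis unfolding sum_sum_sq_diff tree_sum_excess[OF assms] by simp
qed

lemma tree_gap_eq:
  assumes "is_tree V E" "V \<noteq> {}"
  shows "(int (card V) - 2) * sigma E - sigma_t V E = (\<Sum>v\<in>V. gap_term V E v)"
  unfolding gap_term_def sum_weighted_slack_identity[OF tree_sum_excess[OF assms]]
    tree_sigma_t_eq[OF assms] sigma_slack_def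
  by (simp add: algebra_simps)

lemma tree_gap_term_nonneg:
  assumes "is_tree V E" "2 \<le> card V" "v \<in> V"
  shows "0 \<le> gap_term V E v"
  unfolding gap_term_def using tree_excess_ge[OF assms] tree_excess_le_slack[OF assms(1,3)] by simp

lemma tree_sigma_t_le:
  assumes "is_tree V E" "2 \<le> card V"
  shows "sigma_t V E \<le> (int (card V) - 2) * sigma E"
proof -
  have "0 \<le> (\<Sum>v\<in>V. gap_term V E v)" using tree_gap_term_nonneg[OF assms] by (simp add: sum_nonneg)
  then show ?thesis using tree_gap_eq[OF assms(1)] assms(2) by force
qed

lemma tree_gap_term_pos_if_degree_ge_3:
  assumes T: "is_tree V E" and "2 \<le> card V" and v: "v \<in> V" "3 \<le> degree E v"
  obtains p where "p \<in> V" "0 < gap_term V E p"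
proof -
  have "1 \<le> excess E v" using v(2) unfolding excess_def by simp
  show ?thesis
  proof (cases "sigma_slack V E = 2 * excess E v")
    case False
    then have "2 * excess E v < sigma_slack V E" using tree_excess_le_slack[OF T v(1)] by simp
    then show ?thesis using that[OF v(1)] \<open>1 \<le> excess E v\<close> unfolding gap_term_def by simp
  next
    case tight: True
    obtain parent depth where r: "rooted_tree V E v parent depth" using tree_has_rooting[OF T v(1)] by blast
    obtain l where l: "l \<in> V - {v}" "degree E l = 1" using tree_leaf_avoiding[OF T assms(2) v(1)] .
    have "degree E (parent l) = 2"
      using rooted_tree.degree_parent_of_leaf_if_slack_tight[OF r tight _ l] v(2) by simp
    then have "gap_term V E (parent l) = sigma_slack V E" unfolding gap_term_def excess_def by simp
    moreover have "parent l \<in> V" using rooted_tree.parent_in[OF r l(1)] .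
    ultimately show ?thesis using that tight \<open>1 \<le> excess E v\<close> by simp
  qed
qed

lemma tree_sigma_t_less:
  assumes "is_tree V E" "2 \<le> card V" "v \<in> V" "3 \<le> degree E v"
  shows "sigma_t V E < (int (card V) - 2) * sigma E"
proof -
  obtain p where "p \<in> V" "0 < gap_term V E p" using tree_gap_term_pos_if_degree_ge_3[OF assms] .
  moreover have "finite V" using assms(1) unfolding is_tree_def simple_graph_def by simp
  ultimately have "0 < (\<Sum>v\<in>V. gap_term V E v)"
    using tree_gap_term_nonneg[OF assms(1,2)] by (intro sum_pos2) auto
  then show ?thesis using tree_gap_eq[OF assms(1)] assms(3) by force
qed

lemma tree_sigma_t_eq_if_degree_le_2:
  assumes T: "is_tree V E" and "2 \<le> card V" and deg: "\<forall>v\<in>V. degree E v \<le> 2"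
  shows "sigma_t V E = (int (card V) - 2) * sigma E"
proof -
  have "V \<noteq> {}" using assms(2) by auto
  then obtain z where "z \<in> V" by blast
  obtain l where "l \<in> V - {z}" "degree E l = 1" using tree_leaf_avoiding[OF T assms(2) \<open>z \<in> V\<close>] .
  then have l: "l \<in> V" "degree E l = 1" by simp_all
  obtain parent depth where r: "rooted_tree V E l parent depth" using tree_has_rooting[OF T l(1)] by blast
  have slack: "sigma_slack V E \<le> 0" by (rule rooted_tree.slack_nonpos_if_degree_le_2[OF r deg l(2)])
  have "gap_term V E v \<le> 0" if v: "v \<in> V" for v
  proof -
    have "-1 \<le> excess E v" using tree_excess_ge[OF T assms(2) v] .
    moreover have "excess E v \<le> 0" using deg v unfolding excess_def by simp
    ultimately have "excess E v = -1 \<or> excess E v = 0" by linarith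
    then show ?thesis using slack unfolding gap_term_def by auto
  qed
  then have "(\<Sum>v\<in>V. gap_term V E v) \<le> 0" by (simp add: sum_nonpos)
  then show ?thesis using tree_gap_eq[OF T \<open>V \<noteq> {}\<close>] tree_sigma_t_le[OF T assms(2)] by simp
qed

lemma tree_sigma_t_eq_iff_degree_le_2:
  assumes "is_tree V E" "2 \<le> card V"
  shows "sigma_t V E = (int (card V) - 2) * sigma E \<longleftrightarrow> (\<forall>v\<in>V. degree E v \<le> 2)"
proof
  assume eq: "sigma_t V E = (int (card V) - 2) * sigma E"
  show "\<forall>v\<in>V. degree E v \<le> 2"
  proof (intro ballI)
    fix v assume "v \<in> V"
    show "degree E v \<le> 2"
    proof (rule ccontr)
      assume "\<not> degree E v \<le> 2"
      then show False using tree_sigma_t_less[OF assms \<open>v \<in> V\<close>] eq by simp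
    qed
  qed
qed (rule tree_sigma_t_eq_if_degree_le_2[OF assms])

lemma degree_le_2_if_path_graph:
  assumes "is_path_graph V E" "v \<in> V"
  shows "degree E v \<le> 2"
proof -
  obtain f where bij: "bij_betw f {0..<card V} V" and E: "E = {{f i, f (Suc i)} | i. Suc i < card V}"
    using assms(1) unfolding is_path_graph_def by blast
  have "v \<in> f ` {0..<card V}" using bij assms(2) by (simp add: bij_betw_def)
  then obtain k where k: "k < card V" "v = f k" by auto
  have "{e \<in> E. v \<in> e} \<subseteq> {{f (k - 1), f k}, {f k, f (Suc k)}}"
  proof
    fix e assume "e \<in> {e \<in> E. v \<in> e}"
    then obtain i where i: "Suc i < card V" "e = {f i, f (Suc i)}" "v \<in> e" using E by blast
    then have "k = i \<or> k = Suc i"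
      using k bij_betw_imp_inj_on[OF bij] by (auto dest: inj_onD)
    then show "e \<in> {{f (k - 1), f k}, {f k, f (Suc k)}}" using i by auto
  qed
  then have "degree E v \<le> card {{f (k - 1), f k}, {f k, f (Suc k)}}"
    unfolding degree_def by (rule card_mono[rotated]) simp
  also have "\<dots> \<le> 2" by (simp add: card_insert_le_m1)
  finally show ?thesis .
qed

lemma path_graph_if_tree_degree_le_2:
  assumes T: "is_tree V E" and "2 \<le> card V" and deg: "\<forall>v\<in>V. degree E v \<le> 2"
  shows "is_path_graph V E"
proof -
  have "V \<noteq> {}" using assms(2) by auto
  then obtain z where "z \<in> V" by blast
  obtain l where "l \<in> V - {z}" "degree E l = 1" using tree_leaf_avoiding[OF T assms(2) \<open>z \<in> V\<close>] .
  then have l: "l \<in> V" "degree E l = 1" by simp_all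
  obtain parent depth where r: "rooted_tree V E l parent depth" using tree_has_rooting[OF T l(1)] by blast
  have "\<forall>v\<in>V. card (rooted_tree.children V l parent v) \<le> 1"
  proof
    fix v assume "v \<in> V"
    then show "card (rooted_tree.children V l parent v) \<le> 1"
      using rooted_tree.degree_eq[OF r \<open>v \<in> V\<close>] deg l(2) by (cases "v = l") auto
  qed
  then show ?thesis by (rule rooted_tree.is_path_graph_if_children_le_1[OF r])
qed

theorem theorem2:
  fixes V :: "'a set" and E :: "'a set set"
  assumes "is_tree V E" and "card V \<ge> 2"
  shows "sigma_t V E \<le> (int (card V) - 2) * sigma E
     \<and> (sigma_t V E = (int (card V) - 2) * sigma E \<longleftrightarrow> is_path_graph V E)
     \<and> (max_degree V E \<ge> 3 \<longrightarrow> sigma_t V E < (int (card V) - 2) * sigma E)"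
proof -
  have "finite V" using assms(1) unfolding is_tree_def simple_graph_def by simp
  have "V \<noteq> {}" using assms(2) by auto
  have "sigma_t V E = (int (card V) - 2) * sigma E \<longleftrightarrow> (\<forall>v\<in>V. degree E v \<le> 2)"
    by (rule tree_sigma_t_eq_iff_degree_le_2[OF assms])
  also have "\<dots> \<longleftrightarrow> is_path_graph V E"
    using path_graph_if_tree_degree_le_2[OF assms] degree_le_2_if_path_graph by (metis (full_types))
  finally have "sigma_t V E = (int (card V) - 2) * sigma E \<longleftrightarrow> is_path_graph V E" .
  moreover have "max_degree V E \<ge> 3 \<longrightarrow> sigma_t V E < (int (card V) - 2) * sigma E"
  proof
    assume "max_degree V E \<ge> 3"
    then obtain v where "v \<in> V" "3 \<le> degree E v"
      using \<open>finite V\<close> \<open>V \<noteq> {}\<close> unfolding max_degree_def by (auto simp: Max_ge_iff)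
    then show "sigma_t V E < (int (card V) - 2) * sigma E" by (rule tree_sigma_t_less[OF assms])
  qed
  ultimately show ?thesis using tree_sigma_t_le[OF assms] by (intro conjI)
qed

end
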